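(* Let $P$ be a $d$-dimensional convex polytope and let $O$ be an acyclic orientation of its graph $G_P$. Then $$f^O \;\geq\; \sum_{v \in V_P} \bigl|\{F \text{ a nonempty face of } P : v \text{ is a sink of } G_F \text{ with respect to } O\}\bigr| \;\geq\; \sum_{i=0}^d f_i(P),$$ where $f_i(P)$ is the number of $i$-dimensional faces of $P$.
   Context: The graph $G_P=(V_P,E_P)$ of a polytope $P$ has vertex set the vertices of $P$, with $v_i,v_j$ adjacent iff some $1$-dimensional face of $P$ contains both. For a face $F$, $G_F$ is the graph of $F$ (a subgraph of $G_P$), oriented by restricting $O$. For an orientation $O$ of a graph $G=(V,E)$, $f^O:=\sum_{v\in V}2^{\operatorname{indeg}(v)}$, where $\operatorname{indeg}$ is the in-degree with respect to $O$. A sink of a graph with respect to an orientation is a vertex all of whose incident edges are oriented towards it. *)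

theory Defs
  imports "HOL-Analysis.Analysis"
begin

definition poly_vertices :: "'a::euclidean_space set \<Rightarrow> 'a set" where
  "poly_vertices P = {v. v extreme_point_of P}"

definition poly_adj :: "'a::euclidean_space set \<Rightarrow> 'a \<Rightarrow> 'a \<Rightarrow> bool" where
  "poly_adj P u v \<longleftrightarrow> u \<in> poly_vertices P \<and> v \<in> poly_vertices P \<and> u \<noteq> v \<and>
     (\<exists>E. E edge_of P \<and> u \<in> E \<and> v \<in> E)"

text \<open>An orientation of G_P: a relation Ori (Ori u v means the edge is directed u \<rightarrow> v)
  supported on the edges, choosing exactly one direction for every edge.\<close>
definition is_orientation :: "'a::euclidean_space set \<Rightarrow> ('a \<Rightarrow> 'a \<Rightarrow> bool) \<Rightarrow> bool" where
  "is_orientation P Ori \<longleftrightarrow> (\<forall>u v. Ori u v \<longrightarrow> poly_adj P u v) \<and>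
     (\<forall>u v. poly_adj P u v \<longrightarrow> (Ori u v \<longleftrightarrow> \<not> Ori v u))"

definition acyclic_orientation :: "('a \<Rightarrow> 'a \<Rightarrow> bool) \<Rightarrow> bool" where
  "acyclic_orientation Ori \<longleftrightarrow> (\<forall>v. \<not> Ori\<^sup>+\<^sup>+ v v)"

definition indeg :: "'a::euclidean_space set \<Rightarrow> ('a \<Rightarrow> 'a \<Rightarrow> bool) \<Rightarrow> 'a \<Rightarrow> nat" where
  "indeg P Ori v = card {u. poly_adj P u v \<and> Ori u v}"

definition fO :: "'a::euclidean_space set \<Rightarrow> ('a \<Rightarrow> 'a \<Rightarrow> bool) \<Rightarrow> nat" where
  "fO P Ori = (\<Sum>v\<in>poly_vertices P. 2 ^ indeg P Ori v)"

definition is_sink :: "'a::euclidean_space set \<Rightarrow> ('a \<Rightarrow> 'a \<Rightarrow> bool) \<Rightarrow> 'a \<Rightarrow> bool" where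
  "is_sink F Ori v \<longleftrightarrow> v \<in> poly_vertices F \<and> (\<forall>u. poly_adj F u v \<longrightarrow> Ori u v)"

definition f_num :: "'a::euclidean_space set \<Rightarrow> int \<Rightarrow> nat" where
  "f_num P i = card {F. F face_of P \<and> aff_dim F = i}"

end

theory Submission
  imports Defs
begin

text \<open>
  For a vertex v, a nonempty face F is determined by the set of edges of F at v: a face
  F \<noteq> F' through v has an edge at v leaving F \<inter> F', and the other endpoint of that edge is a
  neighbour of v in F but not in F'. When v is a sink of F, these edges all point into v, so the
  faces having v as a sink inject into the subsets of the in-edges of v, which gives
  the first inequality. Every nonempty face has a sink, because the restricted orientation is
  acyclic, which gives the second.
\<close>

lemma finite_poly_vertices: "polytope P \<Longrightarrow> finite (poly_vertices P)"
  unfolding poly_vertices_def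
  using finite_polyhedron_extreme_points polytope_imp_polyhedron by blast

lemma poly_vertices_face_of: "F face_of P \<Longrightarrow> poly_vertices F \<subseteq> poly_vertices P"
  unfolding poly_vertices_def using extreme_point_of_face by blast

lemma poly_adj_face_of:
  assumes F: "F face_of P" and adj: "poly_adj F u v"
  shows "poly_adj P u v"
proof -
  obtain E where E: "E edge_of F" "u \<in> E" "v \<in> E"
    using adj unfolding poly_adj_def by blast
  have "E edge_of P"
    using E(1) face_of_trans[OF _ F] unfolding edge_of_def by blast
  then show ?thesis
    using adj E poly_vertices_face_of[OF F] unfolding poly_adj_def by blast
qed

lemma facet_of_not_subset_facet_of:
  assumes "K facet_of F" "K' facet_of F" "K \<noteq> K'"
  shows "\<not> K \<subseteq> K'"
proof
  assume "K \<subseteq> K'"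
  have K: "K face_of F" and K': "K' face_of F"
    using assms(1,2) by (auto simp: facet_of_def)
  have "K face_of K'"
    using face_of_subset[OF K \<open>K \<subseteq> K'\<close> face_of_imp_subset[OF K']] .
  then have "aff_dim K < aff_dim K'"
    using face_of_aff_dim_lt[OF face_of_imp_convex[OF K']] assms(3) by blast
  then show False
    using assms(1,2) by (simp add: facet_of_def)
qed

lemma polytope_facet_through_vertex_not_subset_face:
  fixes F :: "'a::euclidean_space set"
  assumes F: "polytope F" "aff_dim F \<ge> 2" and v: "v extreme_point_of F"
    and G: "G face_of F" "v \<in> G" "G \<noteq> F"
  obtains L where "L facet_of F" "v \<in> L" "\<not> L \<subseteq> G"
proof -
  have ph: "polyhedron F" using F(1) polytope_imp_polyhedron by blast
  obtain K where K: "K facet_of F" "G \<subseteq> K"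
    using face_of_polyhedron_subset_facet[OF ph G(1)] G by blast
  show thesis
  proof (cases "K = G")
    case False
    then show thesis using that K G(2) by blast
  next
    case True
    have "\<exists>K'. K' facet_of F \<and> v \<in> K' \<and> K' \<noteq> K"
    proof (rule ccontr)
      assume "\<not> ?thesis"
      then have "{K'. K' facet_of F \<and> {v} \<subseteq> K'} = {K}"
        using K G(2) by blast
      moreover have "{v} = \<Inter>{K'. K' facet_of F \<and> {v} \<subseteq> K'}"
        using face_of_polyhedron[OF ph face_of_singleton[THEN iffD2, OF v]] F(2) by fastforce
      ultimately have "aff_dim K = 0" by (metis aff_dim_sing cInf_singleton)
      then show False
        using K(1) F(2) by (simp add: facet_of_def)
    qed
    then obtain K' where "K' facet_of F" "v \<in> K'" "K' \<noteq> K" by blast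
    then show thesis
      using that facet_of_not_subset_facet_of[OF _ K(1)] True by blast
  qed
qed

text \<open>The induction descends to a facet L through v not contained in G, with the proper face
  G \<inter> L of L.\<close>

lemma polytope_edge_leaving_face:
  fixes F :: "'a::euclidean_space set"
  assumes "polytope F" "v extreme_point_of F" "G face_of F" "v \<in> G" "G \<noteq> F"
  shows "\<exists>E. E edge_of F \<and> v \<in> E \<and> \<not> E \<subseteq> G"
  using assms
proof (induction "nat (aff_dim F)" arbitrary: F G rule: less_induct)
  case less
  have vF: "v \<in> F" using less.prems(2) by (simp add: extreme_point_of_def)
  have GF: "G \<subseteq> F" using less.prems(3) face_of_imp_subset by blast
  show ?case
  proof (cases "aff_dim F \<le> 1")
    case True
    have "aff_dim F \<noteq> 0"
    proof
      assume "aff_dim F = 0"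
      then obtain a where "F = {a}" using aff_dim_eq_0 by blast
      then show False using GF less.prems(4,5) by blast
    qed
    moreover have "aff_dim F \<ge> 0"
      using vF by (metis aff_dim_negative_iff empty_iff not_le)
    ultimately have "F edge_of F"
      using True less.prems(1) by (simp add: edge_of_def face_of_refl polytope_imp_convex)
    then show ?thesis using vF GF less.prems(5) by blast
  next
    case False
    then obtain L where L: "L facet_of F" "v \<in> L" "\<not> L \<subseteq> G"
      using polytope_facet_through_vertex_not_subset_face[OF less.prems(1) _ less.prems(2-5)]
      by (metis not_le one_add_one zle_add1_eq_le)
    have Lf: "L face_of F" using L(1) by (simp add: facet_of_def)
    have "G \<inter> L face_of L"
      using face_of_subset[OF face_of_Int[OF less.prems(3) Lf]] face_of_imp_subset[OF Lf] by blast
    moreover have "nat (aff_dim L) < nat (aff_dim F)"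
      using L(1) False by (simp add: facet_of_def)
    moreover have "polytope L" "v extreme_point_of L"
      using face_of_polytope_polytope[OF less.prems(1) Lf] extreme_point_of_face[OF Lf]
        less.prems(2) L(2) by auto
    ultimately obtain E where "E edge_of L" "v \<in> E" "\<not> E \<subseteq> G \<inter> L"
      using less.hyps[of L "G \<inter> L"] L(2,3) less.prems(4) by auto
    moreover have "E edge_of F"
      using \<open>E edge_of L\<close> face_of_trans[OF _ Lf] by (auto simp: edge_of_def)
    ultimately show ?thesis using edge_of_imp_subset by blast
  qed
qed

lemma face_of_subset_if_same_neighbours:
  fixes P :: "'a::euclidean_space set"
  assumes P: "polytope P" and F: "F face_of P" and F': "F' face_of P"
    and v: "v \<in> poly_vertices P" "v \<in> F" "v \<in> F'"
    and same: "{u. poly_adj F u v} = {u. poly_adj F' u v}"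
  shows "F \<subseteq> F'"
proof (rule ccontr)
  assume "\<not> F \<subseteq> F'"
  have Fp: "polytope F" using face_of_polytope_polytope P F by blast
  have vF: "v extreme_point_of F"
    using extreme_point_of_face[OF F] v by (simp add: poly_vertices_def)
  have "F \<inter> F' face_of F"
    using face_of_subset[OF face_of_Int[OF F F']] face_of_imp_subset[OF F] by blast
  then obtain E where E: "E edge_of F" "v \<in> E" "\<not> E \<subseteq> F \<inter> F'"
    using polytope_edge_leaving_face[OF Fp vF] v \<open>\<not> F \<subseteq> F'\<close> by blast
  have Ef: "E face_of F" using E(1) by (simp add: edge_of_def)
  have "{w. w extreme_point_of E} \<subseteq> F'"
  proof
    fix w assume "w \<in> {w. w extreme_point_of E}"
    then have w: "w extreme_point_of E" by simp
    show "w \<in> F'"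
    proof (cases "w = v")
      case False
      have "w extreme_point_of F" using extreme_point_of_face[OF Ef] w by simp
      then have "poly_adj F w v"
        unfolding poly_adj_def poly_vertices_def using vF False E(1,2) w extreme_point_of_def by blast
      then have "poly_adj F' w v" using same by blast
      then show ?thesis unfolding poly_adj_def poly_vertices_def extreme_point_of_def by blast
    qed (use v in simp)
  qed
  then have "E \<subseteq> F'"
    using Krein_Milman_Minkowski[OF face_of_imp_compact[OF polytope_imp_convex[OF Fp]
        polytope_imp_compact[OF Fp] Ef] face_of_imp_convex[OF Ef]]
      hull_minimal face_of_imp_convex[OF F'] by metis
  then show False using E(3) edge_of_imp_subset[OF E(1)] by blast
qed

lemma inj_on_neighbours_faces_through_vertex:
  fixes P :: "'a::euclidean_space set"
  assumes "polytope P" "v \<in> poly_vertices P"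
  shows "inj_on (\<lambda>F. {u. poly_adj F u v}) {F. F face_of P \<and> v \<in> F}"
proof (rule inj_onI)
  fix F F' assume "F \<in> {F. F face_of P \<and> v \<in> F}" "F' \<in> {F. F face_of P \<and> v \<in> F}"
    and "{u. poly_adj F u v} = {u. poly_adj F' u v}"
  then show "F = F'"
    using face_of_subset_if_same_neighbours[OF assms(1) _ _ assms(2)] by (auto intro: subset_antisym)
qed

lemma card_sink_faces_le:
  fixes P :: "'a::euclidean_space set"
  assumes P: "polytope P" and v: "v \<in> poly_vertices P"
  shows "card {F. F face_of P \<and> F \<noteq> {} \<and> is_sink F Ori v} \<le> 2 ^ indeg P Ori v"
proof -
  let ?S = "{F. F face_of P \<and> F \<noteq> {} \<and> is_sink F Ori v}"
  let ?N = "{u. poly_adj P u v \<and> Ori u v}"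
  have "?N \<subseteq> poly_vertices P"
    unfolding poly_adj_def by blast
  then have finN: "finite ?N"
    using finite_subset finite_poly_vertices[OF P] by blast
  have "?S \<subseteq> {F. F face_of P \<and> v \<in> F}"
    unfolding is_sink_def poly_vertices_def extreme_point_of_def by blast
  then have inj: "inj_on (\<lambda>F. {u. poly_adj F u v}) ?S"
    using inj_on_neighbours_faces_through_vertex[OF P v] inj_on_subset by blast
  have "(\<lambda>F. {u. poly_adj F u v}) ` ?S \<subseteq> Pow ?N"
    using poly_adj_face_of unfolding is_sink_def by blast
  then have "card ?S \<le> card (Pow ?N)"
    using card_inj_on_le[OF inj] finN by simp
  also have "\<dots> = 2 ^ indeg P Ori v"
    using finN by (simp add: card_Pow indeg_def)
  finally show ?thesis .
qed

lemma finite_acyclic_orientation_has_sink: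
  assumes "finite S" "S \<noteq> {}" "acyclic_orientation Ori"
  obtains z where "z \<in> S" "\<forall>u\<in>S. \<not> Ori z u"
proof -
  define R where "R = {(a, b). Ori a b \<and> a \<in> S \<and> b \<in> S}"
  have "R \<subseteq> S \<times> S" unfolding R_def by blast
  then have "finite R" using assms(1) finite_subset by blast
  have "Ori\<^sup>+\<^sup>+ a b" if "(a, b) \<in> R\<^sup>+" for a b
    using that by (induction rule: trancl.induct) (auto simp: R_def)
  then have "acyclic R"
    using assms(3) unfolding acyclic_def acyclic_orientation_def by blast
  then have "wf (R\<inverse>)"
    using finite_acyclic_wf[of "R\<inverse>"] \<open>finite R\<close> by simp
  moreover obtain x where "x \<in> S" using assms(2) by blast
  ultimately obtain z where z: "z \<in> S" "\<And>y. (y, z) \<in> R\<inverse> \<Longrightarrow> y \<notin> S"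
    using wfE_min[of "R\<inverse>" x S] by blast
  have "\<forall>u\<in>S. \<not> Ori z u"
    using z unfolding R_def by blast
  with z(1) show thesis by (rule that)
qed

lemma face_has_sink:
  fixes P :: "'a::euclidean_space set"
  assumes P: "polytope P" and F: "F face_of P" "F \<noteq> {}"
    and O: "is_orientation P Ori" and A: "acyclic_orientation Ori"
  obtains v where "is_sink F Ori v"
proof -
  have Fp: "polytope F" using face_of_polytope_polytope P F by blast
  obtain x where "x extreme_point_of F"
    using extreme_point_exists_convex[OF polytope_imp_compact[OF Fp] polytope_imp_convex[OF Fp] F(2)]
    by blast
  then have "poly_vertices F \<noteq> {}" by (auto simp: poly_vertices_def)
  then obtain z where z: "z \<in> poly_vertices F" "\<forall>u\<in>poly_vertices F. \<not> Ori z u"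
    by (rule finite_acyclic_orientation_has_sink[OF finite_poly_vertices[OF Fp] _ A])
  have "Ori u z" if adj: "poly_adj F u z" for u
  proof -
    have "u \<in> poly_vertices F" using adj unfolding poly_adj_def by simp
    then have "\<not> Ori z u" using z(2) by blast
    then show ?thesis
      using O poly_adj_face_of[OF F(1) adj] unfolding is_orientation_def by blast
  qed
  then have "is_sink F Ori z" using z(1) by (simp add: is_sink_def)
  then show thesis by (rule that)
qed

lemma card_nonempty_faces_le_sum_sink_faces:
  fixes P :: "'a::euclidean_space set"
  assumes P: "polytope P" and O: "is_orientation P Ori" and A: "acyclic_orientation Ori"
  shows "card {F. F face_of P \<and> F \<noteq> {}}
           \<le> (\<Sum>v\<in>poly_vertices P. card {F. F face_of P \<and> F \<noteq> {} \<and> is_sink F Ori v})"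
proof -
  let ?S = "\<lambda>v. {F. F face_of P \<and> F \<noteq> {} \<and> is_sink F Ori v}"
  have "{F. F face_of P \<and> F \<noteq> {}} \<subseteq> (\<Union>v\<in>poly_vertices P. ?S v)"
  proof
    fix F assume "F \<in> {F. F face_of P \<and> F \<noteq> {}}"
    then have F: "F face_of P" "F \<noteq> {}" by auto
    then obtain v where sink: "is_sink F Ori v"
      using face_has_sink[OF P _ _ O A] by blast
    then have "v \<in> poly_vertices P"
      using poly_vertices_face_of[OF F(1)] unfolding is_sink_def by blast
    then show "F \<in> (\<Union>v\<in>poly_vertices P. ?S v)" using F sink by blast
  qed
  moreover have "finite (?S v)" for v
    by (rule finite_subset[OF _ finite_polytope_faces[OF P]]) blast
  then have "finite (\<Union>v\<in>poly_vertices P. ?S v)"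
    using finite_poly_vertices[OF P] by simp
  ultimately have "card {F. F face_of P \<and> F \<noteq> {}} \<le> card (\<Union>v\<in>poly_vertices P. ?S v)"
    by (simp add: card_mono)
  also have "\<dots> \<le> (\<Sum>v\<in>poly_vertices P. card (?S v))"
    using card_UN_le[OF finite_poly_vertices[OF P]] .
  finally show ?thesis .
qed

lemma sum_f_num_le_card_nonempty_faces:
  assumes "polytope P"
  shows "(\<Sum>i\<le>d. f_num P (int i)) \<le> card {F. F face_of P \<and> F \<noteq> {}}"
proof -
  have fin: "finite {F. F face_of P \<and> Q F}" for Q
    by (rule finite_subset[OF _ finite_polytope_faces[OF assms]]) blast
  have "(\<Sum>i\<le>d. f_num P (int i)) = card (\<Union>i\<le>d. {F. F face_of P \<and> aff_dim F = int i})"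
    unfolding f_num_def by (rule card_UN_disjoint[symmetric]) (use fin in auto)
  also have "\<dots> \<le> card {F. F face_of P \<and> F \<noteq> {}}"
    by (rule card_mono[OF fin]) auto
  finally show ?thesis .
qed

theorem lemma2p10:
  fixes P :: "'a::euclidean_space set" and Ori :: "'a \<Rightarrow> 'a \<Rightarrow> bool" and d :: nat
  assumes "polytope P" and "aff_dim P = int d"
    and "is_orientation P Ori" and "acyclic_orientation Ori"
  shows "fO P Ori \<ge> (\<Sum>v\<in>poly_vertices P. card {F. F face_of P \<and> F \<noteq> {} \<and> is_sink F Ori v}) \<and>
         (\<Sum>v\<in>poly_vertices P. card {F. F face_of P \<and> F \<noteq> {} \<and> is_sink F Ori v})
           \<ge> (\<Sum>i\<le>d. f_num P (int i))"
proof
  show "fO P Ori \<ge> (\<Sum>v\<in>poly_vertices P. card {F. F face_of P \<and> F \<noteq> {} \<and> is_sink F Ori v})"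
    unfolding fO_def by (rule sum_mono) (rule card_sink_faces_le[OF assms(1)])
  show "(\<Sum>v\<in>poly_vertices P. card {F. F face_of P \<and> F \<noteq> {} \<and> is_sink F Ori v})
          \<ge> (\<Sum>i\<le>d. f_num P (int i))"
    using sum_f_num_le_card_nonempty_faces[OF assms(1), of d]
      card_nonempty_faces_le_sum_sink_faces[OF assms(1,3,4)] by (rule order_trans)
qed

end
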